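(* Consider the multi-agent system with $N$ agents, $\mathcal{I}=\{1,\dots,N\}$, where for each $i\in\mathcal{I}$ \[ \dot x_i=-x_i+B_iu_i,\qquad y_i=h_i(x_i,\mathbf{x}_{-i}), \] with $x_i\in\mathbb{R}^{n_i}$, $u_i\in\mathbb{R}^{m_i}$, $B_i\in\mathbb{R}^{n_i\times m_i}$, in closed loop with the full-information control law \[ \dot u_i=-\frac{1}{\tau_i}B_i^\top \nabla_{x_i}h_i(x_i,\mathbf{x}_{-i}),\qquad \tau_i>0,\ i\in\mathcal{I}, \] equivalently $\dot{\mathbf{u}}=-\boldsymbol{\tau}^{-1}\mathbf{B}^\top F_{\mathrm{x}}(\mathbf{x})$ with $\mathbf{B}=\mathrm{diag}(B_1,\dots,B_N)$ and $\boldsymbol{\tau}=\mathrm{diag}(\tau_1 I_{m_1},\dots,\tau_N I_{m_N})$. Suppose Standing Assumptions 1 and 2 (see context) hold. Then there exists $\tau^*>0$ such that, whenever $\min_{i\in\mathcal{I}}\tau_i\ge\tau^*$, every closed-loop solution $(\mathbf{x}(t),\mathbf{u}(t))$ converges to $(\mathbf{x}^*,\mathbf{u}^* )=(\pi(\mathbf{u}^* ),\mathbf{u}^* )$, where $\mathbf{u}^*$ is a Nash equilibrium of the game below (equivalently, the zero of $F$).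
   Context: Notation: $n=\sum_i n_i$, $m=\sum_i m_i$; $\mathbf{x}=(x_1^\top,\dots,x_N^\top)^\top$, $\mathbf{x}_{-i}$ is $\mathbf{x}$ with block $x_i$ removed (similarly $\mathbf{u}$, $\mathbf{u}_{-i}$). Each $h_i:\mathbb{R}^{n_i}\times\mathbb{R}^{n-n_i}\to\mathbb{R}$. Steady-state map: $\pi(\mathbf{u})=(\pi_1(u_1),\dots,\pi_N(u_N))$ with $\pi_i(u_i)=B_iu_i$ (the equilibrium of $\dot x_i=-x_i+B_iu_i$ under constant input $u_i$); $\pi_{-i}(\mathbf{u}_{-i})$ stacks $\pi_j(u_j)$, $j\ne i$. Game: each agent $i$ solves $\min_{u_i\in\mathbb{R}^{m_i}} h_i(\pi_i(u_i),\pi_{-i}(\mathbf{u}_{-i}))$. A Nash equilibrium is $\mathbf{u}^*$ with $h_i(\pi_i(u_i^* ),\pi_{-i}(\mathbf{u}^*_{-i}))\le \inf_{u_i} h_i(\pi_i(u_i),\pi_{-i}(\mathbf{u}^*_{-i}))$ for all $i$. Pseudo-gradients: $F(\mathbf{u})=\big(\nabla_{u_i}h_i(\pi_i(u_i),\pi_{-i}(\mathbf{u}_{-i}))\big)_{i\in\mathcal{I}}\in\mathbb{R}^m$ and $F_{\mathrm{x}}(\mathbf{x})=\big(\nabla_{x_i}h_i(x_i,\mathbf{x}_{-i})\big)_{i\in\mathcal{I}}\in\mathbb{R}^n$. Standing Assumption 1 (Regularity): for each $i$, $h_i$ is differentiable in $x_i$ and $\nabla_{x_i}h_i$ is Lipschitz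 continuous in $(x_i,\mathbf{x}_{-i})$. Standing Assumption 2 (Strong monotonicity): there is $\mu>0$ with $(F(\mathbf{u})-F(\mathbf{v}))^\top(\mathbf{u}-\mathbf{v})\ge\mu\|\mathbf{u}-\mathbf{v}\|^2$ for all $\mathbf{u},\mathbf{v}\in\mathbb{R}^m$. *)

theory Defs
  imports "HOL-Analysis.Analysis"
begin

text \<open>Agents are the elements of a finite type 'i. The stacked state
  x lives in real^'n and the stacked input u in real^'m; the maps ax :: 'n => 'i and
  au :: 'm => 'i assign every coordinate to its agent (block).\<close>

definition block_dirs :: "('k \<Rightarrow> 'i) \<Rightarrow> 'i \<Rightarrow> (real^'k) set" where
  "block_dirs a i = {d. \<forall>k. a k \<noteq> i \<longrightarrow> d $ k = 0}"

definition block_part :: "('k \<Rightarrow> 'i) \<Rightarrow> 'i \<Rightarrow> real^'k \<Rightarrow> real^'k" where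
  "block_part a i v = (\<chi> k. if a k = i then v $ k else 0)"

definition block_diag :: "('n \<Rightarrow> 'i) \<Rightarrow> ('m \<Rightarrow> 'i) \<Rightarrow> real^'m^'n \<Rightarrow> bool" where
  "block_diag ax au B \<longleftrightarrow> (\<forall>k l. ax k \<noteq> au l \<longrightarrow> B $ k $ l = 0)"

text \<open>G is the stacked partial gradient F_x: for every agent i and every x, the map
  x_i |-> h_i(x_i, x_{-i}) is differentiable, with gradient given by the block i
  components of G x.\<close>
definition is_partial_grad ::
  "('n \<Rightarrow> 'i) \<Rightarrow> ('i \<Rightarrow> real^'n \<Rightarrow> real) \<Rightarrow> (real^'n \<Rightarrow> real^'n) \<Rightarrow> bool" where
  "is_partial_grad ax h G \<longleftrightarrow>
     (\<forall>i x. ((\<lambda>d. h i (x + d)) has_derivative (\<lambda>d. block_part ax i (G x) \<bullet> d))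
              (at 0 within block_dirs ax i))"

text \<open>Nash equilibrium of the game min_{u_i} h_i(pi_i(u_i), pi_{-i}(u_{-i})),
  where pi(u) = B u (stacked).\<close>
definition is_nash ::
  "('m \<Rightarrow> 'i) \<Rightarrow> ('i \<Rightarrow> real^'n \<Rightarrow> real) \<Rightarrow> real^'m^'n \<Rightarrow> real^'m \<Rightarrow> bool" where
  "is_nash au h B us \<longleftrightarrow>
     (\<forall>i v. (\<forall>l. au l \<noteq> i \<longrightarrow> v $ l = us $ l) \<longrightarrow> h i (B *v us) \<le> h i (B *v v))"

end

theory Submission
  imports Defs
begin

text \<open>Because \<open>B\<close> is block diagonal, the pseudo-gradient of the game is
  \<open>F(u) = B\<^sup>T F\<^sub>x(B u)\<close>; being strongly monotone and Lipschitz it has a zero \<open>u\<^sup>*\<close>,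
  and a zero of a monotone pseudo-gradient is a Nash equilibrium. Along the closed loop,
  \<open>V = \<onehalf> \<Sum>\<^sub>l \<tau>\<^sub>l (u\<^sub>l - u\<^sup>*\<^sub>l)\<^sup>2 + c/2 |x - B u|\<^sup>2\<close> satisfies
  \<open>V' \<le> -\<mu>/2 |u - u\<^sup>*|\<^sup>2 - \<onehalf> |x - B u|\<^sup>2\<close> as soon as every \<open>\<tau>\<^sub>i \<ge> \<tau>\<^sup>*\<close>: the slow input
  makes the coupling terms small against the strong monotonicity and the stable state dynamics.
  Hence \<open>V\<close> decays exponentially, \<open>u \<rightarrow> u\<^sup>*\<close> and \<open>x \<rightarrow> B u\<^sup>*\<close>.\<close>

subsection \<open>Block structure\<close>

lemma inner_block_part:
  assumes "e \<in> block_dirs a i"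
  shows "block_part a i v \<bullet> e = v \<bullet> e"
  using assms unfolding block_dirs_def block_part_def inner_vec_def
  by (intro sum.cong) auto

lemma scaleR_mem_block_dirs: "e \<in> block_dirs a i \<Longrightarrow> s *\<^sub>R e \<in> block_dirs a i"
  unfolding block_dirs_def by auto

lemma block_part_diff: "block_part a i v - block_part a i w = block_part a i (v - w)"
  by (simp add: vec_eq_iff block_part_def)

lemma sum_block_part:
  fixes a :: "'k::finite \<Rightarrow> 'i::finite"
  shows "(\<Sum>i\<in>UNIV. block_part a i v) = v"
  by (simp add: vec_eq_iff block_part_def if_distrib sum.delta cong: if_cong)

lemma block_diag_mult_block_dirs:
  assumes "block_diag ax au B" and "e \<in> block_dirs au i"
  shows "B *v e \<in> block_dirs ax i"
  using assms unfolding block_diag_def block_dirs_def matrix_vector_mult_def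
  by (auto intro!: sum.neutral) metis

lemma has_real_derivative_along_block_dir:
  assumes g: "(g has_derivative (\<lambda>d. block_part a i w \<bullet> d)) (at 0 within block_dirs a i)"
    and e: "e \<in> block_dirs a i"
  shows "((\<lambda>s. g (s *\<^sub>R e)) has_real_derivative (w \<bullet> e)) (at 0)"
proof -
  have line: "((\<lambda>s::real. s *\<^sub>R e) has_derivative (\<lambda>s. s *\<^sub>R e)) (at 0)"
    by (auto intro!: derivative_eq_intros)
  have "range (\<lambda>s::real. s *\<^sub>R e) \<subseteq> block_dirs a i"
    using scaleR_mem_block_dirs[OF e] by auto
  then have "(g has_derivative (\<lambda>d. block_part a i w \<bullet> d))
      (at ((\<lambda>s::real. s *\<^sub>R e) 0) within range (\<lambda>s::real. s *\<^sub>R e))"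
    using has_derivative_subset[OF g] by simp
  from diff_chain_within[OF line this]
  have "((\<lambda>s. g (s *\<^sub>R e)) has_derivative (\<lambda>s. block_part a i w \<bullet> (s *\<^sub>R e))) (at 0)"
    by (simp add: o_def)
  moreover have "(\<lambda>s. block_part a i w \<bullet> (s *\<^sub>R e)) = (*) (w \<bullet> e)"
    using inner_block_part[OF e] by (auto simp: fun_eq_iff)
  ultimately show ?thesis
    unfolding has_field_derivative_def by simp
qed

text \<open>Moving \<open>u\<^sub>i\<close> only moves \<open>x\<^sub>i = B\<^sub>i u\<^sub>i\<close>, so the chain rule applies blockwise.\<close>

lemma pseudo_gradient_eq_transpose_mult:
  fixes B :: "real^'m::finite^'n::finite" and au :: "'m \<Rightarrow> 'i"
  assumes Bdiag: "block_diag ax au B"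
    and G: "is_partial_grad ax h G"
    and F: "\<forall>i u. ((\<lambda>d. h i (B *v (u + d))) has_derivative
                     (\<lambda>d. block_part au i (F u) \<bullet> d)) (at 0 within block_dirs au i)"
  shows "F u = transpose B *v G (B *v u)"
proof (rule vec_eq_iff[THEN iffD2], rule allI)
  fix l
  define i where "i = au l"
  define e :: "real^'m" where "e = axis l 1"
  have e: "e \<in> block_dirs au i"
    unfolding e_def i_def block_dirs_def axis_def by auto
  have dF: "((\<lambda>s. h i (B *v (u + s *\<^sub>R e))) has_real_derivative (F u \<bullet> e)) (at 0)"
    using has_real_derivative_along_block_dir[OF F[rule_format, of i u] e] .
  have dG: "((\<lambda>s. h i (B *v u + s *\<^sub>R (B *v e))) has_real_derivative
      (G (B *v u) \<bullet> (B *v e))) (at 0)"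
    using has_real_derivative_along_block_dir[OF G[unfolded is_partial_grad_def, rule_format]
        block_diag_mult_block_dirs[OF Bdiag e]] .
  have "(\<lambda>s. h i (B *v (u + s *\<^sub>R e))) = (\<lambda>s. h i (B *v u + s *\<^sub>R (B *v e)))"
    by (simp add: matrix_vector_right_distrib matrix_vector_mult_scaleR)
  with dF dG have "F u \<bullet> e = G (B *v u) \<bullet> (B *v e)"
    using DERIV_unique by metis
  moreover have "F u \<bullet> e = F u $ l"
    unfolding e_def by (simp add: inner_axis)
  moreover have "G (B *v u) \<bullet> (B *v e) = (transpose B *v G (B *v u)) $ l"
    unfolding e_def inner_vec_def matrix_vector_mult_def transpose_def axis_def
    by (simp add: mult.commute if_distrib cong: if_cong)
  ultimately show "F u $ l = (transpose B *v G (B *v u)) $ l"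
    by simp
qed

lemma lipschitz_of_block_lipschitz:
  fixes G :: "'a::real_normed_vector \<Rightarrow> real^'n::finite" and ax :: "'n \<Rightarrow> 'i::finite"
  assumes "\<forall>i. \<exists>L. \<forall>x y. norm (block_part ax i (G x) - block_part ax i (G y)) \<le> L * norm (x - y)"
  shows "\<exists>L\<ge>0. \<forall>x y. norm (G x - G y) \<le> L * norm (x - y)"
proof -
  obtain L where L: "\<And>i x y. norm (block_part ax i (G x - G y)) \<le> L i * norm (x - y)"
    using assms block_part_diff by metis
  define L\<^sub>G where "L\<^sub>G = (\<Sum>i\<in>UNIV. max (L i) 0)"
  have "norm (G x - G y) \<le> L\<^sub>G * norm (x - y)" for x y
  proof -
    have "norm (G x - G y) = norm (\<Sum>i\<in>UNIV. block_part ax i (G x - G y))"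
      by (simp add: sum_block_part)
    also have "\<dots> \<le> (\<Sum>i\<in>UNIV. norm (block_part ax i (G x - G y)))"
      by (rule norm_sum)
    also have "\<dots> \<le> (\<Sum>i\<in>UNIV. max (L i) 0 * norm (x - y))"
      by (intro sum_mono order_trans[OF L] mult_right_mono) auto
    also have "\<dots> = L\<^sub>G * norm (x - y)"
      unfolding L\<^sub>G_def by (simp add: sum_distrib_right)
    finally show ?thesis .
  qed
  moreover have "L\<^sub>G \<ge> 0"
    unfolding L\<^sub>G_def by (intro sum_nonneg) auto
  ultimately show ?thesis by blast
qed

lemma matrix_sandwich_lipschitz:
  fixes B :: "real^'m::finite^'n::finite"
  assumes G: "\<And>x y. norm (G x - G y) \<le> L * norm (x - y)" and "L \<ge> 0"
    and "\<And>v. norm (B *v v) \<le> \<beta> * norm v" and "\<And>w. norm (transpose B *v w) \<le> \<beta> * norm w"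
    and "\<beta> \<ge> 0"
  shows "norm (transpose B *v G (B *v u) - transpose B *v G (B *v v)) \<le> \<beta> * L * \<beta> * norm (u - v)"
proof -
  have "norm (transpose B *v G (B *v u) - transpose B *v G (B *v v))
      = norm (transpose B *v (G (B *v u) - G (B *v v)))"
    by (simp add: matrix_vector_mult_diff_distrib)
  also have "\<dots> \<le> \<beta> * norm (G (B *v u) - G (B *v v))"
    by (fact assms)
  also have "\<dots> \<le> \<beta> * (L * norm (B *v (u - v)))"
    using G[of "B *v u" "B *v v"] \<open>\<beta> \<ge> 0\<close>
    by (intro mult_left_mono) (auto simp: matrix_vector_mult_diff_distrib)
  also have "\<dots> \<le> \<beta> * (L * (\<beta> * norm (u - v)))"
    using assms by (intro mult_left_mono) auto
  finally show ?thesis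
    by (simp add: ac_simps)
qed

lemma exists_matrix_bound_ge_1:
  fixes A :: "real^'m::finite^'n::finite"
  obtains \<beta> where "\<beta> \<ge> 1" "\<And>v. norm (A *v v) \<le> \<beta> * norm v"
    "\<And>w. norm (transpose A *v w) \<le> \<beta> * norm w"
proof -
  obtain b where b: "\<And>v. norm (A *v v) \<le> norm v * b"
    using bounded_linear.bounded[OF matrix_vector_mul_bounded_linear] by blast
  obtain b' where b': "\<And>w. norm (transpose A *v w) \<le> norm w * b'"
    using bounded_linear.bounded[OF matrix_vector_mul_bounded_linear] by blast
  show ?thesis
  proof
    show "max 1 (max b b') \<ge> 1" by simp
    show "norm (A *v v) \<le> max 1 (max b b') * norm v" for v
      using b[of v] by (smt (verit) mult.commute mult_right_mono norm_ge_zero)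
    show "norm (transpose A *v w) \<le> max 1 (max b b') * norm w" for w
      using b'[of w] by (smt (verit) mult.commute mult_right_mono norm_ge_zero)
  qed
qed

subsection \<open>The game\<close>

text \<open>Along a unilateral deviation \<open>us + t(v - us)\<close> of agent \<open>i\<close> the cost has slope
  \<open>F(us + t(v - us)) \<bullet> (v - us)\<close>, which monotonicity and \<open>F us = 0\<close> make nonnegative.\<close>

lemma zero_of_monotone_pseudo_gradient_is_nash:
  fixes au :: "'m::finite \<Rightarrow> 'i" and B :: "real^'m^'n::finite"
  assumes F: "\<forall>i u. ((\<lambda>d. h i (B *v (u + d))) has_derivative
                     (\<lambda>d. block_part au i (F u) \<bullet> d)) (at 0 within block_dirs au i)"
    and mono: "\<And>u v. (F u - F v) \<bullet> (u - v) \<ge> 0"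
    and zero: "F us = 0"
  shows "is_nash au h B us"
  unfolding is_nash_def
proof (intro allI impI)
  fix i v
  assume "\<forall>l. au l \<noteq> i \<longrightarrow> v $ l = us $ l"
  then have e: "v - us \<in> block_dirs au i"
    unfolding block_dirs_def by auto
  define \<phi> where "\<phi> t = h i (B *v (us + t *\<^sub>R (v - us)))" for t
  have slope: "(\<phi> has_real_derivative (F (us + t *\<^sub>R (v - us)) \<bullet> (v - us))) (at t)" for t
  proof -
    have "((\<lambda>s. \<phi> (s + t)) has_real_derivative (F (us + t *\<^sub>R (v - us)) \<bullet> (v - us))) (at 0)"
      using has_real_derivative_along_block_dir[OF F[rule_format, of i "us + t *\<^sub>R (v - us)"] e]
      unfolding \<phi>_def by (simp add: algebra_simps scaleR_add_left)
    then show ?thesis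
      using DERIV_shift[of \<phi> _ 0 t] by simp
  qed
  have slope_nonneg: "F (us + t *\<^sub>R (v - us)) \<bullet> (v - us) \<ge> 0" if "t \<ge> 0" for t
  proof -
    have "t * (F (us + t *\<^sub>R (v - us)) \<bullet> (v - us)) \<ge> 0"
      using mono[of "us + t *\<^sub>R (v - us)" us] zero by (simp add: inner_diff_left)
    with that zero show ?thesis
      by (cases "t = 0") (simp_all add: zero_le_mult_iff)
  qed
  have "\<phi> 0 \<le> \<phi> 1"
    by (rule DERIV_nonneg_imp_nondecreasing[of 0 1]) (use slope slope_nonneg in auto)
  then show "h i (B *v us) \<le> h i (B *v v)"
    unfolding \<phi>_def by simp
qed

text \<open>For a Lipschitz constant \<open>K \<ge> \<mu>\<close> and \<open>\<alpha> = \<mu>/K\<^sup>2\<close> the map \<open>u \<mapsto> u - \<alpha> F u\<close>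
  is a contraction with factor \<open>\<surd>(1 - \<mu>\<^sup>2/K\<^sup>2)\<close>; its fixed point is a zero of \<open>F\<close>.\<close>

lemma strongly_monotone_lipschitz_has_zero:
  fixes F :: "'a::euclidean_space \<Rightarrow> 'a"
  assumes lip: "\<And>u v. norm (F u - F v) \<le> K * norm (u - v)"
    and mu: "\<mu> > 0"
    and mono: "\<And>u v. (F u - F v) \<bullet> (u - v) \<ge> \<mu> * (norm (u - v))\<^sup>2"
  obtains us where "F us = 0"
proof -
  define K' where "K' = max K 0 + \<mu>"
  have K': "K' > 0" "\<mu> \<le> K'" "K \<le> K'"
    using mu unfolding K'_def by auto
  define \<alpha> where "\<alpha> = \<mu> / K'\<^sup>2"
  define q where "q = 1 - \<mu>\<^sup>2 / K'\<^sup>2"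
  have \<alpha>: "\<alpha> > 0"
    using mu K' unfolding \<alpha>_def by auto
  have q: "0 \<le> q" "q < 1"
  proof -
    have "\<mu>\<^sup>2 \<le> K'\<^sup>2"
      using K' mu by (intro power_mono) auto
    then show "0 \<le> q"
      unfolding q_def using K' by (simp add: field_simps)
    show "q < 1"
      unfolding q_def using mu K' by simp
  qed
  define T where "T u = u - \<alpha> *\<^sub>R F u" for u
  have "(norm (T u - T v))\<^sup>2 \<le> q * (norm (u - v))\<^sup>2" for u v
  proof -
    define d where "d = u - v"
    define f where "f = F u - F v"
    have "norm f \<le> K' * norm d"
      using lip[of u v] K'(3) unfolding f_def d_def
      by (smt (verit, best) mult_right_mono norm_ge_zero)
    then have f_le: "(norm f)\<^sup>2 \<le> K'\<^sup>2 * (norm d)\<^sup>2"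
      by (metis norm_ge_zero power_mono power_mult_distrib)
    have "(norm (T u - T v))\<^sup>2 = (norm d)\<^sup>2 - 2 * \<alpha> * (f \<bullet> d) + \<alpha>\<^sup>2 * (norm f)\<^sup>2"
      unfolding T_def d_def f_def power2_norm_eq_inner
      by (simp add: inner_diff_left inner_diff_right inner_commute power2_eq_square algebra_simps)
    also have "\<dots> \<le> (norm d)\<^sup>2 - 2 * \<alpha> * (\<mu> * (norm d)\<^sup>2) + \<alpha>\<^sup>2 * (K'\<^sup>2 * (norm d)\<^sup>2)"
      using mono[of u v] f_le \<alpha> unfolding f_def d_def
      by (smt (verit, best) mult_left_mono zero_le_power2)
    also have "\<dots> = q * (norm d)\<^sup>2"
      unfolding q_def \<alpha>_def using K' by (simp add: field_simps power2_eq_square)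
    finally show ?thesis
      unfolding d_def .
  qed
  then have "dist (T u) (T v) \<le> sqrt q * dist u v" for u v
    by (metis dist_norm norm_ge_zero real_le_rsqrt real_sqrt_mult real_sqrt_abs abs_norm_cancel)
  then obtain us where "T us = us"
    using banach_fix_type[of "sqrt q" T] q by auto
  then have "\<alpha> *\<^sub>R F us = 0"
    unfolding T_def by (simp add: algebra_simps)
  with \<alpha> that show ?thesis
    by auto
qed

subsection \<open>Exponential stability of the closed loop\<close>

lemma norm_scale_components_le:
  fixes v :: "real^'m::finite"
  assumes "\<And>l. \<bar>s l\<bar> \<le> d"
  shows "norm (\<chi> l. s l * v $ l) \<le> d * norm v"
proof -
  have "d \<ge> 0"
    using assms[of undefined] by linarith
  have "norm (\<chi> l. s l * v $ l) = L2_set (\<lambda>l. \<bar>s l\<bar> * \<bar>v $ l\<bar>) UNIV"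
    by (simp add: norm_vec_def abs_mult)
  also have "\<dots> \<le> L2_set (\<lambda>l. d * \<bar>v $ l\<bar>) UNIV"
    using assms by (intro L2_set_mono mult_right_mono) auto
  also have "\<dots> = d * norm v"
    using \<open>d \<ge> 0\<close> by (simp add: norm_vec_def L2_set_right_distrib)
  finally show ?thesis .
qed

lemma norm_sq_eq_sum_components: "(norm (v :: real^'m::finite))\<^sup>2 = (\<Sum>l\<in>UNIV. (v $ l)\<^sup>2)"
  unfolding power2_norm_eq_inner inner_vec_def by (simp add: power2_eq_square)

lemma weighted_sum_sq_ge:
  fixes v :: "real^'m::finite"
  assumes "\<And>l. a \<le> w l"
  shows "a * (norm v)\<^sup>2 \<le> (\<Sum>l\<in>UNIV. w l * (v $ l)\<^sup>2)"
  unfolding norm_sq_eq_sum_components sum_distrib_left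
  using assms by (intro sum_mono mult_right_mono) auto

lemma weighted_sum_sq_le:
  fixes v :: "real^'m::finite"
  assumes "\<And>l. w l \<le> b"
  shows "(\<Sum>l\<in>UNIV. w l * (v $ l)\<^sup>2) \<le> b * (norm v)\<^sup>2"
  unfolding norm_sq_eq_sum_components sum_distrib_left
  using assms by (intro sum_mono mult_right_mono) auto

text \<open>The two Young inequalities \<open>K E W \<le> \<mu>/4 E\<^sup>2 + K\<^sup>2/\<mu> W\<^sup>2\<close> and
  \<open>c d K W E \<le> \<mu>/4 E\<^sup>2 + (c d K)\<^sup>2/\<mu> W\<^sup>2\<close> absorb the cross terms; the choice of \<open>c\<close>
  leaves \<open>W\<^sup>2/2\<close> over.\<close>

lemma cross_terms_absorbed:
  fixes \<mu> K c d E W :: real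
  assumes mu: "\<mu> > 0" and c: "c = 2 * K\<^sup>2 / \<mu> + 1"
    and d: "d \<ge> 0" "d * K \<le> 1/4" "c * d\<^sup>2 * K\<^sup>2 \<le> \<mu> / 4"
    and EW: "E \<ge> 0" "W \<ge> 0"
  shows "- \<mu> * E\<^sup>2 + K * E * W - c * W\<^sup>2 + c * d * K * W\<^sup>2 + c * d * K * W * E
         \<le> - (\<mu> / 2) * E\<^sup>2 - (1/2) * W\<^sup>2"
proof -
  have c_pos: "c > 0"
    using c mu by (simp add: add_nonneg_pos)
  have young: "a * E * W \<le> \<mu>/4 * E\<^sup>2 + a\<^sup>2/\<mu> * W\<^sup>2" for a
  proof -
    have "0 \<le> (\<mu>/2 * E - a * W)\<^sup>2 / \<mu>"
      using mu by simp
    also have "\<dots> = \<mu>/4 * E\<^sup>2 + a\<^sup>2/\<mu> * W\<^sup>2 - a * E * W"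
      using mu by (simp add: power2_eq_square field_simps)
    finally show ?thesis by simp
  qed
  have "(c * d * K)\<^sup>2/\<mu> = c * (c * d\<^sup>2 * K\<^sup>2) / \<mu>"
    by (simp add: power2_eq_square)
  also have "\<dots> \<le> c * (\<mu>/4) / \<mu>"
    using d(3) c_pos mu by (intro divide_right_mono mult_left_mono) auto
  finally have "(c * d * K)\<^sup>2/\<mu> * W\<^sup>2 \<le> c/4 * W\<^sup>2"
    using mu by (intro mult_right_mono) auto
  moreover have "c * d * K * W\<^sup>2 \<le> c/4 * W\<^sup>2"
    using mult_left_mono[OF d(2), of "c * W\<^sup>2"] c_pos by (simp add: ac_simps)
  moreover have "c * W\<^sup>2 = W\<^sup>2 + 2 * (K\<^sup>2/\<mu> * W\<^sup>2)"
    unfolding c by (simp add: algebra_simps)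
  ultimately show ?thesis
    using young[of K] young[of "c * d * K"] by (simp add: ac_simps)
qed

lemma exp_decay_of_derivative_le:
  fixes V V' :: "real \<Rightarrow> real"
  assumes deriv: "\<And>t. t \<ge> 0 \<Longrightarrow> (V has_real_derivative V' t) (at t within {0..})"
    and decay: "\<And>t. t \<ge> 0 \<Longrightarrow> V' t \<le> - \<kappa> * V t"
    and t: "t \<ge> 0"
  shows "V t \<le> V 0 * exp (- \<kappa> * t)"
proof -
  define W where "W s = V s * exp (\<kappa> * s)" for s
  have "W t \<le> W 0"
  proof (rule DERIV_nonpos_imp_decreasing_open[OF t])
    fix s
    assume s: "0 < s" "s < t"
    have "(V has_real_derivative V' s) (at s within {0<..})"
      using deriv[of s] s by (auto intro: has_field_derivative_subset)
    then have "(V has_real_derivative V' s) (at s)"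
      using at_within_open[of s "{0<..}"] s by simp
    then have "(W has_real_derivative exp (\<kappa> * s) * (V' s + \<kappa> * V s)) (at s)"
      unfolding W_def[abs_def] by (auto intro!: derivative_eq_intros simp: algebra_simps)
    moreover have "exp (\<kappa> * s) * (V' s + \<kappa> * V s) \<le> 0"
      using decay[of s] s by (simp add: mult_nonneg_nonpos)
    ultimately show "\<exists>y. (W has_real_derivative y) (at s) \<and> y \<le> 0"
      by blast
  next
    have "continuous (at s within {0..t}) V" if "0 \<le> s" for s
      using DERIV_continuous[OF deriv[OF that]] by (rule continuous_within_subset) auto
    then have "continuous_on {0..t} V"
      unfolding continuous_on_eq_continuous_within by auto
    then show "continuous_on {0..t} W"
      unfolding W_def by (intro continuous_intros)
  qed
  then show ?thesis
    unfolding W_def by (simp add: exp_minus field_simps)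
qed

lemma tendsto_zero_of_norm_sq_le_exp:
  fixes f :: "real \<Rightarrow> 'a::real_normed_vector"
  assumes "\<kappa> > 0" and "\<forall>\<^sub>F t in at_top. (norm (f t))\<^sup>2 \<le> C * exp (- \<kappa> * t)"
  shows "(f \<longlongrightarrow> 0) at_top"
proof (rule Lim_null_comparison)
  show "\<forall>\<^sub>F t in at_top. norm (f t) \<le> sqrt (C * exp (- \<kappa> * t))"
    using assms(2) by eventually_elim (simp add: real_le_rsqrt)
  have "filterlim (\<lambda>t. \<kappa> * t) at_top at_top"
    using assms(1) by (intro filterlim_tendsto_pos_mult_at_top[OF tendsto_const]) (auto simp: filterlim_ident)
  then have "((\<lambda>t. exp (- \<kappa> * t)) \<longlongrightarrow> 0) at_top"
    using filterlim_compose[OF exp_at_top] tendsto_inverse_0_at_top by (fastforce simp: exp_minus)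
  from tendsto_real_sqrt[OF tendsto_mult_right_zero[OF this, of C]]
  show "((\<lambda>t. sqrt (C * exp (- \<kappa> * t))) \<longlongrightarrow> 0) at_top"
    by simp
qed

text \<open>The closed loop is a singularly perturbed system: for large \<open>\<tau>\<close> the state \<open>x\<close> is fast
  and tracks its quasi-steady state \<open>\<pi>(u) = B u\<close>, while \<open>u\<close> slowly follows the reduced
  pseudo-gradient flow \<open>\<dot>u = -\<tau>\<^sup>-\<^sup>1 F(u)\<close>.\<close>

locale strongly_monotone_feedback =
  fixes B :: "real^'m::finite^'n::finite" and G :: "real^'n \<Rightarrow> real^'n"
    and us :: "real^'m" and \<mu> L \<beta> :: real
  assumes equilibrium: "transpose B *v G (B *v us) = 0"
    and strongly_monotone:
      "\<And>u v. (transpose B *v G (B *v u) - transpose B *v G (B *v v)) \<bullet> (u - v) \<ge> \<mu> * (norm (u - v))\<^sup>2"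
    and mu_pos: "\<mu> > 0"
    and G_lipschitz: "\<And>x y. norm (G x - G y) \<le> L * norm (x - y)"
    and L_nonneg: "L \<ge> 0"
    and B_bound: "\<And>v. norm (B *v v) \<le> \<beta> * norm v"
    and transpose_B_bound: "\<And>w. norm (transpose B *v w) \<le> \<beta> * norm w"
    and beta_ge_1: "\<beta> \<ge> 1"
begin

text \<open>\<open>gain\<close> dominates the coupling constants \<open>\<beta> L\<close>, \<open>\<beta>\<^sup>2 L\<close>, \<open>\<beta>\<^sup>3 L\<close> of the estimates below;
  \<open>weight\<close> and \<open>tau_star\<close> are then chosen as required by \<open>cross_terms_absorbed\<close>.\<close>

definition gain :: real where "gain = \<beta> ^ 3 * L + 1"

definition weight :: real where "weight = 2 * gain\<^sup>2 / \<mu> + 1"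

definition tau_star :: real where "tau_star = 4 * gain + 4 * weight * gain\<^sup>2 / \<mu> + 1"

definition input_rate :: "('m \<Rightarrow> 'i) \<Rightarrow> ('i \<Rightarrow> real) \<Rightarrow> real^'n \<Rightarrow> real^'m" where
  "input_rate au tau x = (\<chi> l. - (1 / tau (au l)) * (transpose B *v G x) $ l)"

definition lyapunov :: "('m \<Rightarrow> 'i) \<Rightarrow> ('i \<Rightarrow> real) \<Rightarrow> real^'n \<Rightarrow> real^'m \<Rightarrow> real" where
  "lyapunov au tau x u =
     (1/2) * (\<Sum>l\<in>UNIV. tau (au l) * ((u - us) $ l)\<^sup>2) + weight / 2 * (norm (x - B *v u))\<^sup>2"

lemma gain_ge: "gain > 0" "\<beta> * L \<le> gain" "\<beta>\<^sup>2 * L \<le> gain" "\<beta> ^ 3 * L \<le> gain"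
proof -
  have "\<beta> \<le> \<beta>\<^sup>2" "\<beta>\<^sup>2 \<le> \<beta> ^ 3"
    using beta_ge_1 by (simp_all add: power2_eq_square power3_eq_cube)
  then show "\<beta> * L \<le> gain" "\<beta>\<^sup>2 * L \<le> gain" "\<beta> ^ 3 * L \<le> gain"
    unfolding gain_def using L_nonneg by (smt (verit) mult_right_mono)+
  show "gain > 0"
    unfolding gain_def using L_nonneg beta_ge_1 by (intro add_nonneg_pos mult_nonneg_nonneg) auto
qed

lemma weight_pos: "weight > 0"
  unfolding weight_def using mu_pos by (simp add: add_nonneg_pos)

lemma tau_star_ge: "tau_star \<ge> 1" "4 * gain \<le> tau_star" "4 * weight * gain\<^sup>2 / \<mu> \<le> tau_star"
proof -
  have "0 \<le> 4 * weight * gain\<^sup>2 / \<mu>" "0 \<le> 4 * gain"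
    using weight_pos mu_pos gain_ge(1) by simp_all
  then show "tau_star \<ge> 1" "4 * gain \<le> tau_star" "4 * weight * gain\<^sup>2 / \<mu> \<le> tau_star"
    unfolding tau_star_def by linarith+
qed

lemma transpose_B_G_diff_le: "norm (transpose B *v (G x - G y)) \<le> \<beta> * L * norm (x - y)"
proof -
  have "norm (transpose B *v (G x - G y)) \<le> \<beta> * norm (G x - G y)"
    by (rule transpose_B_bound)
  also have "\<dots> \<le> \<beta> * (L * norm (x - y))"
    using G_lipschitz beta_ge_1 by (intro mult_left_mono) auto
  finally show ?thesis
    by (simp add: mult.assoc)
qed

lemma gradient_norm_le:
  "norm (transpose B *v G x) \<le> \<beta> * L * (norm (x - B *v u) + \<beta> * norm (u - us))"
proof -
  have "norm (transpose B *v G x) = norm (transpose B *v (G x - G (B *v us)))"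
    using equilibrium by (simp add: matrix_vector_mult_diff_distrib)
  also have "\<dots> \<le> \<beta> * L * norm (x - B *v us)"
    by (rule transpose_B_G_diff_le)
  also have "\<dots> \<le> \<beta> * L * (norm (x - B *v u) + \<beta> * norm (u - us))"
  proof (rule mult_left_mono)
    show "norm (x - B *v us) \<le> norm (x - B *v u) + \<beta> * norm (u - us)"
      using norm_triangle_ineq[of "x - B *v u" "B *v (u - us)"] B_bound[of "u - us"]
      by (simp add: matrix_vector_mult_diff_distrib)
    show "0 \<le> \<beta> * L"
      using beta_ge_1 L_nonneg by simp
  qed
  finally show ?thesis .
qed

lemma gradient_inner_ge:
  "(u - us) \<bullet> (transpose B *v G x)
     \<ge> \<mu> * (norm (u - us))\<^sup>2 - \<beta> * L * norm (u - us) * norm (x - B *v u)"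
proof -
  have split: "transpose B *v G x = transpose B *v (G x - G (B *v u)) +
      (transpose B *v G (B *v u) - transpose B *v G (B *v us))"
    using equilibrium by (simp add: matrix_vector_mult_diff_distrib)
  have "\<bar>(u - us) \<bullet> (transpose B *v (G x - G (B *v u)))\<bar>
      \<le> norm (u - us) * norm (transpose B *v (G x - G (B *v u)))"
    by (rule Cauchy_Schwarz_ineq2)
  also have "\<dots> \<le> norm (u - us) * (\<beta> * L * norm (x - B *v u))"
    by (intro mult_left_mono transpose_B_G_diff_le) simp
  finally have "- (\<beta> * L * norm (u - us) * norm (x - B *v u))
      \<le> (u - us) \<bullet> (transpose B *v (G x - G (B *v u)))"
    by (simp add: abs_le_iff ac_simps)
  moreover have "\<mu> * (norm (u - us))\<^sup>2
      \<le> (u - us) \<bullet> (transpose B *v G (B *v u) - transpose B *v G (B *v us))"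
    using strongly_monotone[of u us] by (simp add: inner_commute)
  ultimately show ?thesis
    unfolding split inner_add_right by linarith
qed

lemma input_rate_norm_le:
  assumes "\<And>i. tau_star \<le> tau i"
  shows "norm (input_rate au tau x) \<le> norm (transpose B *v G x) / tau_star"
proof -
  have "\<bar>- (1 / tau (au l))\<bar> \<le> 1 / tau_star" for l
    using assms[of "au l"] tau_star_ge(1) by (simp add: frac_le)
  from norm_scale_components_le[of "\<lambda>l. - (1 / tau (au l))", OF this]
  show ?thesis
    unfolding input_rate_def by simp
qed

lemma weighted_sum_input_rate:
  assumes "\<And>i. tau i > 0"
  shows "(\<Sum>l\<in>UNIV. tau (au l) * (e $ l * input_rate au tau x $ l)) = - (e \<bullet> (transpose B *v G x))"
proof -
  have "tau (au l) * (e $ l * input_rate au tau x $ l) = - (e $ l * (transpose B *v G x) $ l)" for l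
    using assms[of "au l"] unfolding input_rate_def by (simp add: field_simps)
  then show ?thesis
    by (simp add: inner_vec_def sum_negf)
qed

lemma lyapunov_derivative_input_term_le:
  assumes tau: "\<And>i. tau_star \<le> tau i"
  shows "(\<Sum>l\<in>UNIV. tau (au l) * ((u - us) $ l * input_rate au tau x $ l))
         \<le> - \<mu> * (norm (u - us))\<^sup>2 + \<beta> * L * norm (u - us) * norm (x - B *v u)"
proof -
  have "tau i > 0" for i
    using tau[of i] tau_star_ge(1) by linarith
  from weighted_sum_input_rate[where tau = tau and au = au and e = "u - us" and x = x, OF this]
  show ?thesis
    using gradient_inner_ge[where u = u and x = x] by linarith
qed

lemma lyapunov_derivative_state_term_le:
  assumes tau: "\<And>i. tau_star \<le> tau i"
  shows "(x - B *v u) \<bullet> ((- x + B *v u) - B *v input_rate au tau x)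
         \<le> - (norm (x - B *v u))\<^sup>2
            + \<beta>\<^sup>2 * L / tau_star * norm (x - B *v u) * (norm (x - B *v u) + \<beta> * norm (u - us))"
proof -
  define E where "E = norm (u - us)"
  define W where "W = norm (x - B *v u)"
  define r where "r = input_rate au tau x"
  have "norm r \<le> norm (transpose B *v G x) / tau_star"
    unfolding r_def by (fact input_rate_norm_le[OF tau])
  also have "\<dots> \<le> \<beta> * L * (W + \<beta> * E) / tau_star"
    using gradient_norm_le[where x = x and u = u] tau_star_ge(1)
    unfolding W_def E_def by (simp add: divide_right_mono)
  finally have "norm (B *v r) \<le> \<beta> * (\<beta> * L * (W + \<beta> * E) / tau_star)"
    using B_bound[of r] mult_left_mono[of _ _ \<beta>] beta_ge_1 by (meson order_trans zero_le_one)
  then have "W * norm (B *v r) \<le> W * (\<beta> * (\<beta> * L * (W + \<beta> * E) / tau_star))"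
    unfolding W_def by (rule mult_left_mono) simp
  moreover have "\<bar>(x - B *v u) \<bullet> (B *v r)\<bar> \<le> W * norm (B *v r)"
    unfolding W_def by (rule Cauchy_Schwarz_ineq2)
  moreover have "W * (\<beta> * (\<beta> * L * (W + \<beta> * E) / tau_star)) = \<beta>\<^sup>2 * L / tau_star * W * (W + \<beta> * E)"
    by (simp add: power2_eq_square ac_simps)
  moreover have "- ((x - B *v u) \<bullet> (B *v r)) \<le> \<bar>(x - B *v u) \<bullet> (B *v r)\<bar>"
    by simp
  ultimately have "- ((x - B *v u) \<bullet> (B *v r)) \<le> \<beta>\<^sup>2 * L / tau_star * W * (W + \<beta> * E)"
    by linarith
  then show ?thesis
    unfolding E_def W_def r_def by (simp add: inner_diff_right power2_norm_eq_inner)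
qed

lemma lyapunov_derivative_le:
  assumes tau: "\<And>i. tau_star \<le> tau i"
  shows "(\<Sum>l\<in>UNIV. tau (au l) * ((u - us) $ l * input_rate au tau x $ l))
           + weight * ((x - B *v u) \<bullet> ((- x + B *v u) - B *v input_rate au tau x))
         \<le> - (\<mu> / 2) * (norm (u - us))\<^sup>2 - (1/2) * (norm (x - B *v u))\<^sup>2"
proof -
  define E where "E = norm (u - us)"
  define W where "W = norm (x - B *v u)"
  define d where "d = 1 / tau_star"
  have EW: "E \<ge> 0" "W \<ge> 0" and d: "d \<ge> 0"
    unfolding E_def W_def d_def using tau_star_ge(1) by auto
  have "weight * ((x - B *v u) \<bullet> ((- x + B *v u) - B *v input_rate au tau x))
      \<le> weight * (- W\<^sup>2 + \<beta>\<^sup>2 * L / tau_star * W * (W + \<beta> * E))"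
    using lyapunov_derivative_state_term_le[where tau = tau and au = au and u = u and x = x, OF tau] weight_pos
    unfolding E_def W_def by (intro mult_left_mono) auto
  also have "\<dots> = - weight * W\<^sup>2 + weight * d * (\<beta>\<^sup>2 * L) * W\<^sup>2 + weight * d * (\<beta> ^ 3 * L) * W * E"
    unfolding d_def by (simp add: algebra_simps power2_eq_square power3_eq_cube add_divide_distrib)
  finally have "(\<Sum>l\<in>UNIV. tau (au l) * ((u - us) $ l * input_rate au tau x $ l))
        + weight * ((x - B *v u) \<bullet> ((- x + B *v u) - B *v input_rate au tau x))
      \<le> - \<mu> * E\<^sup>2 + (\<beta> * L) * E * W - weight * W\<^sup>2
         + weight * d * (\<beta>\<^sup>2 * L) * W\<^sup>2 + weight * d * (\<beta> ^ 3 * L) * W * E"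
    using lyapunov_derivative_input_term_le[where tau = tau and au = au and u = u and x = x, OF tau] unfolding E_def W_def by linarith
  also have "\<dots> \<le> - \<mu> * E\<^sup>2 + gain * E * W - weight * W\<^sup>2 + weight * d * gain * W\<^sup>2 + weight * d * gain * W * E"
  proof -
    have wd: "0 \<le> weight * d"
      using weight_pos d by simp
    have "(\<beta> * L) * E * W \<le> gain * E * W"
      using gain_ge(2) EW by (intro mult_right_mono) auto
    moreover have "weight * d * (\<beta>\<^sup>2 * L) * W\<^sup>2 \<le> weight * d * gain * W\<^sup>2"
      using gain_ge(3) wd by (intro mult_right_mono mult_left_mono) auto
    moreover have "weight * d * (\<beta> ^ 3 * L) * W * E \<le> weight * d * gain * W * E"
      using gain_ge(4) wd EW by (intro mult_right_mono mult_left_mono) auto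
    ultimately show ?thesis
      by linarith
  qed
  also have "\<dots> \<le> - (\<mu> / 2) * E\<^sup>2 - (1/2) * W\<^sup>2"
  proof (rule cross_terms_absorbed[OF mu_pos weight_def d _ _ EW])
    show "d * gain \<le> 1/4"
      using tau_star_ge unfolding d_def by (simp add: field_simps)
    have "4 * weight * gain\<^sup>2 \<le> \<mu> * tau_star"
      using tau_star_ge(3) mu_pos by (simp add: field_simps)
    also have "\<dots> \<le> \<mu> * tau_star\<^sup>2"
      using tau_star_ge(1) mu_pos by (simp add: power2_eq_square)
    finally show "weight * d\<^sup>2 * gain\<^sup>2 \<le> \<mu> / 4"
      using tau_star_ge(1) unfolding d_def by (simp add: field_simps power2_eq_square)
  qed
  finally show ?thesis
    unfolding E_def W_def .
qed

lemma lyapunov_has_derivative: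
  assumes x: "(x has_vector_derivative x') (at t within S)"
    and u: "(u has_vector_derivative u') (at t within S)"
  shows "((\<lambda>t. lyapunov au tau (x t) (u t)) has_real_derivative
           (\<Sum>l\<in>UNIV. tau (au l) * ((u t - us) $ l * u' $ l))
           + weight * ((x t - B *v u t) \<bullet> (x' - B *v u'))) (at t within S)"
proof -
  have "((\<lambda>t. u t $ l) has_real_derivative u' $ l) (at t within S)" for l
    using bounded_linear.has_vector_derivative[OF bounded_linear_vec_nth u]
    by (simp add: has_real_derivative_iff_has_vector_derivative)
  then have input: "((\<lambda>t. \<Sum>l\<in>UNIV. tau (au l) * ((u t - us) $ l)\<^sup>2) has_real_derivative
      (\<Sum>l\<in>UNIV. 2 * (tau (au l) * ((u t - us) $ l * u' $ l)))) (at t within S)"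
    by (intro DERIV_sum) (auto intro!: derivative_eq_intros)
  have "((\<lambda>t. x t - B *v u t) has_vector_derivative (x' - B *v u')) (at t within S)"
    by (intro has_vector_derivative_diff x
        bounded_linear.has_vector_derivative[OF matrix_vector_mul_bounded_linear] u)
  from bounded_bilinear.has_vector_derivative[OF bounded_bilinear_inner this this]
  have state: "((\<lambda>t. (norm (x t - B *v u t))\<^sup>2) has_real_derivative
      2 * ((x t - B *v u t) \<bullet> (x' - B *v u'))) (at t within S)"
    by (simp add: has_real_derivative_iff_has_vector_derivative inner_commute power2_norm_eq_inner)
  show ?thesis
    using DERIV_add[OF DERIV_cmult[OF input, of "1/2"] DERIV_cmult[OF state, of "weight/2"]]
    unfolding lyapunov_def by (simp add: sum_distrib_left[symmetric])
qed

lemma lyapunov_ge: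
  assumes "\<And>i. tau_star \<le> tau i"
  shows "tau_star / 2 * (norm (u - us))\<^sup>2 \<le> lyapunov au tau x u"
    and "weight / 2 * (norm (x - B *v u))\<^sup>2 \<le> lyapunov au tau x u"
proof -
  have "tau_star * (norm (u - us))\<^sup>2 \<le> (\<Sum>l\<in>UNIV. tau (au l) * ((u - us) $ l)\<^sup>2)"
    using assms by (intro weighted_sum_sq_ge)
  moreover have "0 \<le> tau_star * (norm (u - us))\<^sup>2" "0 \<le> weight * (norm (x - B *v u))\<^sup>2"
    using tau_star_ge(1) weight_pos by simp_all
  ultimately show "tau_star / 2 * (norm (u - us))\<^sup>2 \<le> lyapunov au tau x u"
    and "weight / 2 * (norm (x - B *v u))\<^sup>2 \<le> lyapunov au tau x u"
    unfolding lyapunov_def by simp_all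
qed

lemma lyapunov_le:
  assumes "\<And>i. tau i \<le> T"
  shows "lyapunov au tau x u \<le> T / 2 * (norm (u - us))\<^sup>2 + weight / 2 * (norm (x - B *v u))\<^sup>2"
  using weighted_sum_sq_le[of "\<lambda>l. tau (au l)" T "u - us"] assms
  unfolding lyapunov_def by simp

theorem closed_loop_converges:
  fixes au :: "'m \<Rightarrow> 'i::finite"
  assumes tau: "\<And>i. tau_star \<le> tau i"
    and ode: "\<forall>t\<ge>0. (x has_vector_derivative (- x t + B *v u t)) (at t within {0..}) \<and>
                    (u has_vector_derivative input_rate au tau (x t)) (at t within {0..})"
  shows "(u \<longlongrightarrow> us) at_top" and "(x \<longlongrightarrow> B *v us) at_top"
proof -
  define V where "V t = lyapunov au tau (x t) (u t)" for t
  define V' where "V' t = (\<Sum>l\<in>UNIV. tau (au l) * ((u t - us) $ l * input_rate au tau (x t) $ l))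
      + weight * ((x t - B *v u t) \<bullet> ((- x t + B *v u t) - B *v input_rate au tau (x t)))" for t
  define T where "T = Max (range tau)"
  have T: "tau i \<le> T" for i
    unfolding T_def by (intro Max_ge) auto
  have T_pos: "T > 0"
    using T[of undefined] tau[of undefined] tau_star_ge(1) by linarith
  define \<kappa> where "\<kappa> = min (\<mu> / T) (1 / weight)"
  have \<kappa>: "\<kappa> > 0" "\<kappa> * T \<le> \<mu>" "\<kappa> * weight \<le> 1"
    unfolding \<kappa>_def using mu_pos T_pos weight_pos by (auto simp: min_def field_simps)
  have "V' t \<le> - \<kappa> * V t" if "t \<ge> 0" for t
  proof -
    have "\<kappa> * V t \<le> (\<kappa> * T) / 2 * (norm (u t - us))\<^sup>2 + (\<kappa> * weight) / 2 * (norm (x t - B *v u t))\<^sup>2"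
      using mult_left_mono[OF lyapunov_le[OF T], of \<kappa>] \<kappa>(1)
      unfolding V_def by (simp add: algebra_simps)
    also have "\<dots> \<le> \<mu> / 2 * (norm (u t - us))\<^sup>2 + 1 / 2 * (norm (x t - B *v u t))\<^sup>2"
      using \<kappa> by (intro add_mono mult_right_mono divide_right_mono) auto
    finally show ?thesis
      using lyapunov_derivative_le[where tau = tau and au = au and x = "x t" and u = "u t", OF tau]
      unfolding V'_def by simp
  qed
  moreover have "(V has_real_derivative V' t) (at t within {0..})" if "t \<ge> 0" for t
    using lyapunov_has_derivative ode that unfolding V_def[abs_def] V'_def by blast
  ultimately have decay: "V t \<le> V 0 * exp (- \<kappa> * t)" if "t \<ge> 0" for t
    using exp_decay_of_derivative_le that by blast
  have "(norm (u t - us))\<^sup>2 \<le> 2 / tau_star * V 0 * exp (- \<kappa> * t)" if "t \<ge> 0" for t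
    using lyapunov_ge(1)[where tau = tau and au = au and x = "x t" and u = "u t", OF tau] decay[OF that] tau_star_ge(1)
    unfolding V_def by (simp add: field_simps)
  then have "((\<lambda>t. u t - us) \<longlongrightarrow> 0) at_top"
    by (intro tendsto_zero_of_norm_sq_le_exp[OF \<kappa>(1)] eventually_at_top_linorderI) blast
  then show u_lim: "(u \<longlongrightarrow> us) at_top"
    by (simp add: Lim_null[symmetric])
  have "(norm (x t - B *v u t))\<^sup>2 \<le> 2 / weight * V 0 * exp (- \<kappa> * t)" if "t \<ge> 0" for t
    using lyapunov_ge(2)[where tau = tau and au = au and x = "x t" and u = "u t", OF tau] decay[OF that] weight_pos
    unfolding V_def by (simp add: field_simps)
  then have "((\<lambda>t. x t - B *v u t) \<longlongrightarrow> 0) at_top"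
    by (intro tendsto_zero_of_norm_sq_le_exp[OF \<kappa>(1)] eventually_at_top_linorderI) blast
  from tendsto_add[OF this bounded_linear.tendsto[OF matrix_vector_mul_bounded_linear[of B] u_lim]]
  show "(x \<longlongrightarrow> B *v us) at_top"
    by simp
qed

end

theorem theorem1:
  fixes ax :: "'n::finite \<Rightarrow> 'i::finite"
    and au :: "'m::finite \<Rightarrow> 'i"
    and B :: "real^'m^'n"
    and h :: "'i \<Rightarrow> real^'n \<Rightarrow> real"
    and G :: "real^'n \<Rightarrow> real^'n"
    and F :: "real^'m \<Rightarrow> real^'m"
  assumes Bdiag: "block_diag ax au B"
    and Gdef: "is_partial_grad ax h G"
    and Fdef: "\<forall>i u. ((\<lambda>d. h i (B *v (u + d))) has_derivative
                        (\<lambda>d. block_part au i (F u) \<bullet> d)) (at 0 within block_dirs au i)"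
    and lip: "\<forall>i. \<exists>L. \<forall>x y. norm (block_part ax i (G x) - block_part ax i (G y)) \<le> L * norm (x - y)"
    and mono: "\<exists>\<mu>>0. \<forall>u v. (F u - F v) \<bullet> (u - v) \<ge> \<mu> * (norm (u - v))\<^sup>2"
  shows "\<exists>tau_star>0. \<forall>tau :: 'i \<Rightarrow> real. (\<forall>i. tau i \<ge> tau_star) \<longrightarrow>
           (\<forall>x :: real \<Rightarrow> real^'n. \<forall>u :: real \<Rightarrow> real^'m.
              (\<forall>t\<ge>0. (x has_vector_derivative (- x t + B *v u t)) (at t within {0..}) \<and>
                      (u has_vector_derivative
                          (\<chi> l. - (1 / tau (au l)) * (transpose B *v G (x t)) $ l)) (at t within {0..}))
              \<longrightarrow> (\<exists>us. is_nash au h B us \<and> (x \<longlongrightarrow> B *v us) at_top \<and> (u \<longlongrightarrow> us) at_top))"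
proof -
  obtain \<mu> where mu: "\<mu> > 0" and F_mono: "\<And>u v. (F u - F v) \<bullet> (u - v) \<ge> \<mu> * (norm (u - v))\<^sup>2"
    using mono by blast
  note F_eq = pseudo_gradient_eq_transpose_mult[OF Bdiag Gdef Fdef]
  obtain L where L: "L \<ge> 0" "\<And>x y. norm (G x - G y) \<le> L * norm (x - y)"
    using lipschitz_of_block_lipschitz[OF lip] by blast
  obtain \<beta> where \<beta>: "\<beta> \<ge> 1" "\<And>v. norm (B *v v) \<le> \<beta> * norm v"
    "\<And>w. norm (transpose B *v w) \<le> \<beta> * norm w"
    using exists_matrix_bound_ge_1[of B] by blast
  have "norm (F u - F v) \<le> \<beta> * L * \<beta> * norm (u - v)" for u v
    unfolding F_eq using matrix_sandwich_lipschitz[OF L(2,1) \<beta>(2,3)] \<beta>(1) by simp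
  then obtain us where us: "F us = 0"
    using mu F_mono by (rule strongly_monotone_lipschitz_has_zero)
  have nash: "is_nash au h B us"
    by (rule zero_of_monotone_pseudo_gradient_is_nash[OF Fdef _ us])
      (use F_mono mu in \<open>meson order_trans mult_nonneg_nonneg less_imp_le zero_le_power2\<close>)
  interpret strongly_monotone_feedback B G us \<mu> L \<beta>
    using us F_mono mu L \<beta> by unfold_locales (simp_all add: F_eq)
  show ?thesis
  proof (intro exI[of _ tau_star] conjI allI impI)
    show "tau_star > 0"
      using tau_star_ge(1) by simp
    fix tau :: "'i \<Rightarrow> real" and x u
    assume "\<forall>i. tau i \<ge> tau_star" and "\<forall>t\<ge>0. (x has_vector_derivative (- x t + B *v u t)) (at t within {0..}) \<and>
        (u has_vector_derivative (\<chi> l. - (1 / tau (au l)) * (transpose B *v G (x t)) $ l)) (at t within {0..})"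
    then have "(u \<longlongrightarrow> us) at_top" "(x \<longlongrightarrow> B *v us) at_top"
      using closed_loop_converges[where au = au and tau = tau and x = x and u = u]
      unfolding input_rate_def by blast+
    with nash show "\<exists>us. is_nash au h B us \<and> (x \<longlongrightarrow> B *v us) at_top \<and> (u \<longlongrightarrow> us) at_top"
      by blast
  qed
qed

end
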